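(* Let $T$ be a tree with root $r$, edges directed towards $r$, let $c:V(T)\to\mathbb{Z}$, and let $X$ be an edge set of $T$ that is legal for $c$. Then there is a rayless $X'\subseteq X$ such that (1) $A(v,X')\ge c(v)$ for all vertices $v$ with $A(v,X)\ge c(v)$; and (2) $A(v,X')=A(v,X)$ for all $v\in ter(X)$.
   Context: Edges are ordered pairs $st$ pointing from $s$ to $t$, directed towards $r$; a leaf is a vertex with no incoming edges. For an edge set $X$, $V(X)$ is the set of vertices incident with an edge of $X$, and $ter(X)$ is the set of vertices $s$ such that there is no vertex $t$ with $st\in X$. $A(v,X)$ is the number of edges of $X$ pointing to $v$ minus the number pointing away from $v$. An edge set is \emph{rayless} if it contains no ray. A \emph{leafless forest} is an edge set $S$ such that the subforest $(V(S),S)$ of $T$ has no leaf (no vertex without an incoming edge of $S$). Given $c$, a subset $S\subseteq X$ is \emph{illegal} for $c$ if $S$ is a leafless forest and $A(s,X\setminus S)\le c(s)$ for all $st\in S$; $X$ is \emph{legal} for $c$ if no nonempty subset of $X$ is illegal for $c$. *)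

theory Defs
  imports "HOL-Library.Extended_Real"
begin

definition rooted_tree :: "'v set \<Rightarrow> ('v \<times> 'v) set \<Rightarrow> 'v \<Rightarrow> bool" where
  "rooted_tree V E r \<longleftrightarrow>
     E \<subseteq> V \<times> V \<and> r \<in> V \<and>
     (\<forall>t. (r, t) \<notin> E) \<and>
     (\<forall>s\<in>V. s \<noteq> r \<longrightarrow> (\<exists>!t. (s, t) \<in> E)) \<and>
     (\<forall>s\<in>V. (s, r) \<in> E\<^sup>*)"

definition verts :: "('v \<times> 'v) set \<Rightarrow> 'v set" where
  "verts X = {v. \<exists>e\<in>X. v = fst e \<or> v = snd e}"

definition ter :: "('v \<times> 'v) set \<Rightarrow> 'v set" where
  "ter X = {s \<in> verts X. \<not> (\<exists>t. (s, t) \<in> X)}"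

definition A :: "'v \<Rightarrow> ('v \<times> 'v) set \<Rightarrow> ereal" where
  "A v X = (if finite {s. (s, v) \<in> X} then ereal (real (card {s. (s, v) \<in> X})) else \<infinity>)
           - ereal (real (card {t. (v, t) \<in> X}))"

definition is_ray_in :: "('v \<times> 'v) set \<Rightarrow> (nat \<Rightarrow> 'v) \<Rightarrow> bool" where
  "is_ray_in X f \<longleftrightarrow> inj f \<and> (\<forall>i. (f i, f (Suc i)) \<in> X \<or> (f (Suc i), f i) \<in> X)"

definition rayless :: "('v \<times> 'v) set \<Rightarrow> bool" where
  "rayless X \<longleftrightarrow> \<not> (\<exists>f. is_ray_in X f)"

definition leafless_forest :: "('v \<times> 'v) set \<Rightarrow> bool" where
  "leafless_forest S \<longleftrightarrow> (\<forall>v\<in>verts S. \<exists>s. (s, v) \<in> S)"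

definition illegal :: "('v \<Rightarrow> int) \<Rightarrow> ('v \<times> 'v) set \<Rightarrow> ('v \<times> 'v) set \<Rightarrow> bool" where
  "illegal c X S \<longleftrightarrow> S \<subseteq> X \<and> leafless_forest S \<and>
     (\<forall>(s, t)\<in>S. A s (X - S) \<le> ereal (real_of_int (c s)))"

definition legal :: "('v \<Rightarrow> int) \<Rightarrow> ('v \<times> 'v) set \<Rightarrow> bool" where
  "legal c X \<longleftrightarrow> (\<forall>S. S \<subseteq> X \<longrightarrow> S \<noteq> {} \<longrightarrow> \<not> illegal c X S)"

end

theory Submission
  imports Defs
begin

text \<open>Vertices of \<open>X\<close> are ranked by an iteration: a vertex enters level \<open>n + 1\<close> if
  \<open>A(s, X) < c(s)\<close> or if it has more than \<open>c(s)\<close> children in level \<open>n\<close>. The unranked sources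
  of \<open>X\<close> would span an illegal set, so legality puts every non-terminal vertex into some level.
  Keeping only the edges into terminals and the edges into vertices with \<open>A(t, X) \<ge> c(t)\<close> that
  come from strictly lower rank preserves both conditions; a ray of the resulting edge set
  would either descend forever, which strictly decreases ranks, or ascend forever, which is
  impossible in a tree rooted at \<open>r\<close>.\<close>

lemma card_out_edges_le_1:
  assumes "single_valued Y"
  shows "finite {t. (v, t) \<in> Y} \<and> card {t. (v, t) \<in> Y} \<le> 1"
proof (cases "\<exists>t. (v, t) \<in> Y")
  case True
  then obtain t where "(v, t) \<in> Y" by blast
  with assms have "{t. (v, t) \<in> Y} = {t}" by (auto dest: single_valuedD)
  then show ?thesis by simp
qed simp

lemma card_out_edges_eq_1:
  assumes "single_valued Y" "(v, t) \<in> Y"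
  shows "card {t. (v, t) \<in> Y} = 1"
proof -
  from assms have "{t. (v, t) \<in> Y} = {t}" by (auto dest: single_valuedD)
  then show ?thesis by simp
qed

lemma A_finite_eq:
  assumes "finite {s. (s, v) \<in> Y}"
  shows "A v Y = ereal (real (card {s. (s, v) \<in> Y}) - real (card {t. (v, t) \<in> Y}))"
  using assms by (simp add: A_def)

lemma A_ge_if_many_in_edges:
  assumes "single_valued Y" "finite F" "F \<subseteq> {u. (u, v) \<in> Y}" "k + 1 \<le> int (card F)"
  shows "ereal (real_of_int k) \<le> A v Y"
proof (cases "finite {u. (u, v) \<in> Y}")
  case True
  have "card F \<le> card {u. (u, v) \<in> Y}" using card_mono[OF True assms(3)] .
  moreover have "card {t. (v, t) \<in> Y} \<le> 1" using card_out_edges_le_1[OF assms(1)] by blast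
  ultimately show ?thesis using assms(4) by (simp add: A_finite_eq[OF True])
qed (simp add: A_def)

definition rank_step :: "('v \<Rightarrow> int) \<Rightarrow> ('v \<times> 'v) set \<Rightarrow> 'v set \<Rightarrow> 'v set" where
  "rank_step c X R = {s. A s X < ereal (real_of_int (c s)) \<or>
      (\<exists>F. finite F \<and> F \<subseteq> {u. (u, s) \<in> X} \<inter> R \<and> c s + 1 \<le> int (card F))}"

primrec rank_level :: "('v \<Rightarrow> int) \<Rightarrow> ('v \<times> 'v) set \<Rightarrow> nat \<Rightarrow> 'v set" where
  "rank_level c X 0 = {}"
| "rank_level c X (Suc n) = rank_step c X (rank_level c X n)"

definition ranked :: "('v \<Rightarrow> int) \<Rightarrow> ('v \<times> 'v) set \<Rightarrow> 'v set" where
  "ranked c X = (\<Union>n. rank_level c X n)"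

definition rank :: "('v \<Rightarrow> int) \<Rightarrow> ('v \<times> 'v) set \<Rightarrow> 'v \<Rightarrow> nat" where
  "rank c X s = (LEAST n. s \<in> rank_level c X n)"

lemma rank_step_mono: "R \<subseteq> R' \<Longrightarrow> rank_step c X R \<subseteq> rank_step c X R'"
  unfolding rank_step_def by blast

lemma rank_level_mono: "m \<le> n \<Longrightarrow> rank_level c X m \<subseteq> rank_level c X n"
proof -
  have "rank_level c X n \<subseteq> rank_level c X (Suc n)" for n
    by (induction n) (auto intro: rank_step_mono[THEN subsetD])
  then show "m \<le> n \<Longrightarrow> ?thesis" by (rule lift_Suc_mono_le)
qed

lemma finite_subset_ranked_imp_level:
  assumes "finite F" "F \<subseteq> ranked c X"
  shows "\<exists>n. F \<subseteq> rank_level c X n"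
  using assms
proof (induction F rule: finite_induct)
  case (insert x F)
  then obtain m n where "x \<in> rank_level c X m" "F \<subseteq> rank_level c X n"
    by (auto simp: ranked_def)
  then have "insert x F \<subseteq> rank_level c X (max m n)"
    using rank_level_mono[of m "max m n" c X] rank_level_mono[of n "max m n" c X] by auto
  then show ?case by blast
qed simp

lemma rank_le: "s \<in> rank_level c X n \<Longrightarrow> rank c X s \<le> n"
  unfolding rank_def by (rule Least_le)

lemma ranked_imp_rank_step:
  assumes "s \<in> ranked c X"
  obtains k where "rank c X s = Suc k" "s \<in> rank_step c X (rank_level c X k)"
proof -
  from assms obtain n where "s \<in> rank_level c X n" by (auto simp: ranked_def)
  then have s: "s \<in> rank_level c X (rank c X s)" unfolding rank_def by (rule LeastI)
  then obtain k where "rank c X s = Suc k" by (cases "rank c X s") auto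
  with s show ?thesis using that by simp
qed

lemma unranked_notin_rank_step:
  assumes "s \<notin> ranked c X"
  shows "s \<notin> rank_step c X (rank_level c X n)"
proof -
  have "s \<notin> rank_level c X (Suc n)" using assms unfolding ranked_def by blast
  then show ?thesis by simp
qed

lemma unranked_imp_A_ge:
  assumes "s \<notin> ranked c X"
  shows "ereal (real_of_int (c s)) \<le> A s X"
  using unranked_notin_rank_step[OF assms, of 0] by (simp add: rank_step_def not_less)

lemma unranked_imp_few_ranked_children:
  assumes "s \<notin> ranked c X"
  shows "finite {u. (u, s) \<in> X \<and> u \<in> ranked c X}"
    and "int (card {u. (u, s) \<in> X \<and> u \<in> ranked c X}) \<le> c s"
proof -
  have few: "int (card F) \<le> c s"
    if F: "finite F" "F \<subseteq> {u. (u, s) \<in> X \<and> u \<in> ranked c X}" for F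
  proof -
    obtain n where n: "F \<subseteq> rank_level c X n"
      using finite_subset_ranked_imp_level[OF F(1)] F(2) by blast
    have "F \<subseteq> {u. (u, s) \<in> X} \<inter> rank_level c X n" using F(2) n by blast
    moreover have "\<not> (\<exists>F. finite F \<and> F \<subseteq> {u. (u, s) \<in> X} \<inter> rank_level c X n
        \<and> c s + 1 \<le> int (card F))"
      using unranked_notin_rank_step[OF assms] unfolding rank_step_def by simp
    ultimately have "\<not> c s + 1 \<le> int (card F)" using F(1) by blast
    then show ?thesis by linarith
  qed
  show fin: "finite {u. (u, s) \<in> X \<and> u \<in> ranked c X}"
  proof (rule ccontr)
    assume "infinite {u. (u, s) \<in> X \<and> u \<in> ranked c X}"
    then obtain F where "F \<subseteq> {u. (u, s) \<in> X \<and> u \<in> ranked c X}" "finite F"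
        and card: "card F = nat (c s) + 1"
      using infinite_arbitrarily_large by blast
    with few have "int (card F) \<le> c s" by blast
    with card show False by linarith
  qed
  show "int (card {u. (u, s) \<in> X \<and> u \<in> ranked c X}) \<le> c s"
    using few[OF fin] by blast
qed

text \<open>The edges leaving unranked vertices form an illegal set.\<close>

lemma legal_imp_Domain_ranked:
  assumes legal: "legal c X" and sv: "single_valued X"
  shows "Domain X \<subseteq> ranked c X"
proof
  fix s assume "s \<in> Domain X"
  define S where "S = {(u, t) \<in> X. u \<notin> ranked c X}"
  have unranked_child: "\<exists>u. (u, w) \<in> S" if "(w, t) \<in> S" for w t
  proof (rule ccontr)
    assume "\<not> ?thesis"
    then have children: "{u. (u, w) \<in> X} = {u. (u, w) \<in> X \<and> u \<in> ranked c X}"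
      by (auto simp: S_def)
    have w: "w \<notin> ranked c X" "(w, t) \<in> X" using that by (auto simp: S_def)
    have fin: "finite {u. (u, w) \<in> X}"
      using unranked_imp_few_ranked_children(1)[OF w(1)] children by simp
    have "A w X = ereal (real (card {u. (u, w) \<in> X}) - 1)"
      using A_finite_eq[OF fin] card_out_edges_eq_1[OF sv w(2)] by simp
    also have "\<dots> < ereal (real_of_int (c w))"
      using unranked_imp_few_ranked_children(2)[OF w(1)] children by simp
    finally show False using unranked_imp_A_ge[OF w(1)] by simp
  qed
  have "illegal c X S"
    unfolding illegal_def
  proof (intro conjI)
    show "leafless_forest S"
      unfolding leafless_forest_def verts_def using unranked_child by fastforce
    have "A u (X - S) \<le> ereal (real_of_int (c u))" if "u \<notin> ranked c X" for u
    proof -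
      have "{v. (v, u) \<in> X - S} = {v. (v, u) \<in> X \<and> v \<in> ranked c X}"
           "{t. (u, t) \<in> X - S} = {}"
        using that by (auto simp: S_def)
      then show ?thesis
        using unranked_imp_few_ranked_children[OF that] by (simp add: A_def)
    qed
    then show "\<forall>(u, t)\<in>S. A u (X - S) \<le> ereal (real_of_int (c u))"
      by (auto simp: S_def)
  qed (auto simp: S_def)
  with legal have "S = {}" unfolding legal_def illegal_def by blast
  with \<open>s \<in> Domain X\<close> show "s \<in> ranked c X" by (auto simp: S_def)
qed

lemma rayless_if_no_infinite_paths:
  assumes sv: "single_valued Y"
    and no_ascending: "\<nexists>f. \<forall>i. (f i, f (Suc i)) \<in> Y"
    and no_descending: "\<nexists>f. \<forall>i. (f (Suc i), f i) \<in> Y"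
  shows "rayless Y"
  unfolding rayless_def is_ray_in_def
proof clarify
  fix f assume inj: "inj f" and step: "\<forall>i. (f i, f (Suc i)) \<in> Y \<or> (f (Suc i), f i) \<in> Y"
  have descend_on: "(f (Suc (Suc i)), f (Suc i)) \<in> Y" if "(f (Suc i), f i) \<in> Y" for i
  proof (rule ccontr)
    assume "\<not> ?thesis"
    with step have "(f (Suc i), f (Suc (Suc i))) \<in> Y" by blast
    with sv that have "f i = f (Suc (Suc i))" by (rule single_valuedD)
    with inj show False by (simp add: inj_eq)
  qed
  show False
  proof (cases "\<exists>i. (f (Suc i), f i) \<in> Y")
    case True
    then obtain i where "(f (Suc i), f i) \<in> Y" by blast
    then have "(f (Suc (i + k)), f (i + k)) \<in> Y" for k
      by (induction k) (simp_all add: descend_on)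
    then have "\<exists>g. \<forall>k. (g (Suc k), g k) \<in> Y" by (intro exI[of _ "\<lambda>k. f (i + k)"]) simp
    with no_descending show False by blast
  next
    case False
    with step no_ascending show False by blast
  qed
qed

lemma single_valued_path_reaches:
  assumes "(x, y) \<in> E\<^sup>*" "single_valued E" "f 0 = x" "\<forall>i. (f i, f (Suc i)) \<in> E"
  shows "\<exists>n. f n = y"
  using assms(1,3,4)
proof (induction arbitrary: f rule: converse_rtrancl_induct)
  case (step x z)
  have "(x, f (Suc 0)) \<in> E" using step.prems by metis
  with \<open>single_valued E\<close> step.hyps(1) have "z = f (Suc 0)" by (rule single_valuedD)
  then obtain n where "f (Suc n) = y" using step.IH[of "\<lambda>i. f (Suc i)"] step.prems(2) by auto
  then show ?case ..
qed auto

lemma rooted_tree_single_valued: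
  assumes "rooted_tree V E r"
  shows "single_valued E"
proof (rule single_valuedI)
  fix s t t' assume "(s, t) \<in> E" "(s, t') \<in> E"
  moreover from this assms have "s \<in> V" "s \<noteq> r" unfolding rooted_tree_def by auto
  ultimately show "t = t'" using assms unfolding rooted_tree_def by blast
qed

lemma rooted_tree_no_ascending_path:
  assumes tree: "rooted_tree V E r"
  shows "\<nexists>f. \<forall>i. (f i, f (Suc i)) \<in> E"
proof
  assume "\<exists>f. \<forall>i. (f i, f (Suc i)) \<in> E"
  then obtain f where path: "\<forall>i. (f i, f (Suc i)) \<in> E" by blast
  have "(f 0, r) \<in> E\<^sup>*"
    using path[rule_format, of 0] tree unfolding rooted_tree_def by auto
  then obtain n where "f n = r"
    using single_valued_path_reaches rooted_tree_single_valued[OF tree] refl path by metis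
  with path[rule_format, of n] tree show False unfolding rooted_tree_def by auto
qed

definition pruned :: "('v \<Rightarrow> int) \<Rightarrow> ('v \<times> 'v) set \<Rightarrow> ('v \<times> 'v) set" where
  "pruned c X = {(s, t) \<in> X. t \<notin> Domain X \<or>
      (ereal (real_of_int (c t)) \<le> A t X \<and> rank c X s < rank c X t)}"

lemma pruned_subset: "pruned c X \<subseteq> X"
  unfolding pruned_def by auto

lemma A_pruned_eq:
  assumes "t \<notin> Domain X"
  shows "A t (pruned c X) = A t X"
proof -
  have "{s. (s, t) \<in> pruned c X} = {s. (s, t) \<in> X}" "{u. (t, u) \<in> pruned c X} = {u. (t, u) \<in> X}"
    using assms by (auto simp: pruned_def)
  then show ?thesis by (simp add: A_def)
qed

lemma A_pruned_ge:
  assumes "legal c X" "single_valued X" "t \<in> Domain X"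
    and large: "ereal (real_of_int (c t)) \<le> A t X"
  shows "ereal (real_of_int (c t)) \<le> A t (pruned c X)"
proof -
  have "t \<in> ranked c X" using legal_imp_Domain_ranked assms(1-3) by blast
  then obtain k where k: "rank c X t = Suc k" "t \<in> rank_step c X (rank_level c X k)"
    by (rule ranked_imp_rank_step)
  moreover have "\<not> A t X < ereal (real_of_int (c t))" using large by simp
  ultimately obtain F where F: "finite F" "F \<subseteq> {u. (u, t) \<in> X} \<inter> rank_level c X k"
      "c t + 1 \<le> int (card F)"
    unfolding rank_step_def by blast
  have "(u, t) \<in> pruned c X" if "u \<in> F" for u
  proof -
    have "rank c X u < rank c X t" using F(2) that rank_le[of u c X k] k(1) by auto
    then show ?thesis using F(2) that large unfolding pruned_def by blast
  qed
  then have "F \<subseteq> {u. (u, t) \<in> pruned c X}" by blast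
  with single_valued_subset[OF pruned_subset assms(2)] F(1) show ?thesis
    using F(3) by (rule A_ge_if_many_in_edges)
qed

lemma pruned_rayless:
  assumes tree: "rooted_tree V E r" and "X \<subseteq> E"
  shows "rayless (pruned c X)"
proof (rule rayless_if_no_infinite_paths)
  have sub: "pruned c X \<subseteq> E" using pruned_subset assms(2) by blast
  show "single_valued (pruned c X)"
    using single_valued_subset[OF sub rooted_tree_single_valued[OF tree]] .
  show "\<nexists>f. \<forall>i. (f i, f (Suc i)) \<in> pruned c X"
    using rooted_tree_no_ascending_path[OF tree] sub by blast
  show "\<nexists>f. \<forall>i. (f (Suc i), f i) \<in> pruned c X"
  proof
    assume "\<exists>f. \<forall>i. (f (Suc i), f i) \<in> pruned c X"
    then obtain f where descending: "\<forall>i. (f (Suc i), f i) \<in> pruned c X" by blast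
    have "rank c X (f (Suc (Suc i))) < rank c X (f (Suc i))" for i
    proof -
      have "f (Suc i) \<in> Domain X" using descending pruned_subset by blast
      moreover have "(f (Suc (Suc i)), f (Suc i)) \<in> pruned c X" using descending by blast
      ultimately show ?thesis unfolding pruned_def by blast
    qed
    moreover obtain k where "((\<lambda>i. rank c X (f (Suc i))) (Suc k), rank c X (f (Suc k)))
        \<notin> {(m, n). m < n}"
      using wf_less by (rule wf_no_infinite_down_chainE)
    ultimately show False by simp
  qed
qed

theorem lemma2p8:
  fixes V :: "'v set" and E :: "('v \<times> 'v) set" and r :: 'v
    and c :: "'v \<Rightarrow> int" and X :: "('v \<times> 'v) set"
  assumes "rooted_tree V E r"
    and "X \<subseteq> E"
    and "legal c X"
  shows "\<exists>X'. X' \<subseteq> X \<and> rayless X' \<and>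
           (\<forall>v\<in>V. A v X \<ge> ereal (real_of_int (c v)) \<longrightarrow> A v X' \<ge> ereal (real_of_int (c v))) \<and>
           (\<forall>v\<in>ter X. A v X' = A v X)"
proof (intro exI conjI ballI impI)
  have sv: "single_valued X"
    using single_valued_subset[OF assms(2) rooted_tree_single_valued[OF assms(1)]] .
  show "pruned c X \<subseteq> X" by (rule pruned_subset)
  show "rayless (pruned c X)" using pruned_rayless assms(1,2) .
  show "A v (pruned c X) \<ge> ereal (real_of_int (c v))"
    if "A v X \<ge> ereal (real_of_int (c v))" for v
  proof (cases "v \<in> Domain X")
    case True
    with A_pruned_ge[OF assms(3) sv] that show ?thesis by blast
  next
    case False
    with A_pruned_eq[OF False] that show ?thesis by simp
  qed
  show "A v (pruned c X) = A v X" if "v \<in> ter X" for v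
    using that by (intro A_pruned_eq) (auto simp: ter_def)
qed

end
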